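(* Let $G=(V,E)$ be a finite connected graph with $n$ vertices and edges $e_1,\dots,e_m$, each edge given an orientation, and let $h=m-n+1$. Let $\partial:\mathbb{R}^E\to\mathbb{R}^V$ be the boundary map $e\mapsto \partial^+(e)-\partial^-(e)$ (head minus tail), so that $H_1(G,\mathbb{Z})=\ker(\partial)\cap\mathbb{Z}^E$ is free of rank $h$. Fix a $\mathbb{Z}$-basis $\gamma_1,\dots,\gamma_h$ of $H_1(G,\mathbb{Z})$ and let $M$ be the $h\times m$ real matrix whose $i$-th row is the coordinate vector of $\gamma_i$ in the standard basis $e_1,\dots,e_m$ of $\mathbb{R}^E$. Let $\mathbf{p}\in\mathbb{R}^V$ be a nonzero vector whose coordinates sum to $0$, let $\omega\in\mathbb{R}^E$ with $\partial(\omega)=\mathbf{p}$, and let $N$ be the $(h+1)\times m$ matrix whose rows are the coordinate vectors of $\gamma_1,\dots,\gamma_h,\omega$. Let $U$ be a topological space, $y_1,\dots,y_m:U\to\mathbb{R}_{>0}$ continuous functions, and $Y=\mathrm{diag}(y_1,\dots,y_m)$. Let $A:U\to\mathrm{Mat}_{m\times m}(\mathbb{R})$ be a map such that (i) there is $C>0$ with all entries of $A(s)$ in $[-C,C]$ for all $s\in U$, and (ii) the matrices $M(Y+A)M^\tau$ and $N(Y+A)N^\tau$ are invertible at every point of $U$. Then $$\frac{\det(N(Y+A)N^\tau)}{\det(M(Y+A)M^\tau)}-\frac{\det(NYN^\tau)}{\det(MYM^\tau)}=O_{\underline y}(1).$$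
   Context: Notation: for real functions $F_1,F_2$ on $U$, $F_1=O_{\underline y}(F_2)$ means there exist constants $c,C'>0$ such that $|F_1(s)|\le c|F_2(s)|$ for all $s\in U$ with $y_1(s),\dots,y_m(s)\ge C'$. All matrices are evaluated pointwise at $s\in U$; $X^\tau$ denotes the transpose. *)

theory Defs
  imports Main "Jordan_Normal_Form.Determinant"
begin

text \<open>Graph: vertices 0..<n, oriented edges 0..<m, edge j goes from tal j to hed j.
  Loops and multiple edges are allowed.\<close>

definition adj :: "(nat \<Rightarrow> nat) \<Rightarrow> (nat \<Rightarrow> nat) \<Rightarrow> nat \<Rightarrow> nat \<Rightarrow> nat \<Rightarrow> bool" where
  "adj hed tal m u v \<longleftrightarrow> (\<exists>j<m. (tal j = u \<and> hed j = v) \<or> (tal j = v \<and> hed j = u))"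

definition graph_connected :: "nat \<Rightarrow> nat \<Rightarrow> (nat \<Rightarrow> nat) \<Rightarrow> (nat \<Rightarrow> nat) \<Rightarrow> bool" where
  "graph_connected n m hed tal \<longleftrightarrow> (\<forall>u<n. \<forall>v<n. (adj hed tal m)\<^sup>*\<^sup>* u v)"

definition bdry :: "nat \<Rightarrow> (nat \<Rightarrow> nat) \<Rightarrow> (nat \<Rightarrow> nat) \<Rightarrow> (nat \<Rightarrow> 'a::comm_ring_1) \<Rightarrow> nat \<Rightarrow> 'a" where
  "bdry m hed tal x v = (\<Sum>j<m. (if hed j = v then x j else 0) - (if tal j = v then x j else 0))"

definition is_cycle :: "nat \<Rightarrow> nat \<Rightarrow> (nat \<Rightarrow> nat) \<Rightarrow> (nat \<Rightarrow> nat) \<Rightarrow> (nat \<Rightarrow> int) \<Rightarrow> bool" where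
  "is_cycle n m hed tal z \<longleftrightarrow> (\<forall>v<n. bdry m hed tal z v = 0)"

definition is_H1_basis :: "nat \<Rightarrow> nat \<Rightarrow> (nat \<Rightarrow> nat) \<Rightarrow> (nat \<Rightarrow> nat) \<Rightarrow> nat \<Rightarrow> (nat \<Rightarrow> nat \<Rightarrow> int) \<Rightarrow> bool" where
  "is_H1_basis n m hed tal h \<gamma> \<longleftrightarrow>
     (\<forall>i<h. is_cycle n m hed tal (\<gamma> i)) \<and>
     (\<forall>z. is_cycle n m hed tal z \<longrightarrow> (\<exists>c::nat \<Rightarrow> int. \<forall>j<m. z j = (\<Sum>i<h. c i * \<gamma> i j))) \<and>
     (\<forall>c::nat \<Rightarrow> int. (\<forall>j<m. (\<Sum>i<h. c i * \<gamma> i j) = 0) \<longrightarrow> (\<forall>i<h. c i = 0))"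

definition diagm :: "nat \<Rightarrow> (nat \<Rightarrow> real) \<Rightarrow> real mat" where
  "diagm m d = mat m m (\<lambda>(i,j). if i = j then d i else 0)"

end

theory Submission
  imports Defs
begin

text \<open>The ratio det (N X N^T) / det (M X M^T) is a Schur complement: it is the energy
  x^T X x of x = \<omega> - \<Sum>_k c_k \<gamma>_k, where the cycle correction is chosen to make x
  X-orthogonal to all cycles. For X = Y diagonal and positive, x is the potential flow with
  boundary p. Potential flows have no directed cycles, so a cut argument bounds every |x_e| by
  \<Sum>_v |p_v|, uniformly in Y. Passing from Y to Y + A moves the minimiser by a cycle \<delta>;
  once Y dominates A, coercivity gives |\<delta>| = O(1), and the two energies differ by O(1).\<close>

section \<open>Bilinear forms on coordinate vectors\<close>

definition bilin :: "nat \<Rightarrow> real mat \<Rightarrow> (nat \<Rightarrow> real) \<Rightarrow> (nat \<Rightarrow> real) \<Rightarrow> real" where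
  "bilin m X u w = (\<Sum>j<m. \<Sum>l<m. u j * X $$ (j,l) * w l)"

definition norm1 :: "nat \<Rightarrow> (nat \<Rightarrow> real) \<Rightarrow> real" where
  "norm1 m u = (\<Sum>j<m. \<bar>u j\<bar>)"

definition sumsq :: "nat \<Rightarrow> (nat \<Rightarrow> real) \<Rightarrow> real" where
  "sumsq m u = (\<Sum>j<m. (u j)\<^sup>2)"

lemma bilin_cong:
  "(\<And>j. j < m \<Longrightarrow> u j = u' j) \<Longrightarrow> (\<And>l. l < m \<Longrightarrow> w l = w' l) \<Longrightarrow> bilin m X u w = bilin m X u' w'"
  unfolding bilin_def by (intro sum.cong refl) auto

lemma bilin_add_left: "bilin m X (\<lambda>j. u j + u' j) w = bilin m X u w + bilin m X u' w"
  unfolding bilin_def by (simp add: sum.distrib[symmetric] distrib_right)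

lemma bilin_add_right: "bilin m X u (\<lambda>l. w l + w' l) = bilin m X u w + bilin m X u w'"
  unfolding bilin_def by (simp add: sum.distrib[symmetric] distrib_left)

lemma bilin_diff_right: "bilin m X u (\<lambda>l. w l - w' l) = bilin m X u w - bilin m X u w'"
  unfolding bilin_def by (simp add: sum_subtractf[symmetric] right_diff_distrib)

lemma bilin_add_mat:
  assumes "X \<in> carrier_mat m m" "Z \<in> carrier_mat m m"
  shows "bilin m (X + Z) u w = bilin m X u w + bilin m Z u w"
  unfolding bilin_def sum.distrib[symmetric] using assms
  by (intro sum.cong refl) (simp add: distrib_left distrib_right)

lemma bilin_sum_left: "bilin m X (\<lambda>j. \<Sum>i<h. c i * g i j) w = (\<Sum>i<h. c i * bilin m X (g i) w)"
proof -
  have "bilin m X (\<lambda>j. \<Sum>i<h. c i * g i j) w = (\<Sum>j<m. \<Sum>l<m. \<Sum>i<h. c i * (g i j * X $$ (j,l) * w l))"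
    unfolding bilin_def by (intro sum.cong refl) (simp add: sum_distrib_left sum_distrib_right mult_ac)
  also have "\<dots> = (\<Sum>i<h. \<Sum>j<m. \<Sum>l<m. c i * (g i j * X $$ (j,l) * w l))"
    by (subst sum.swap, subst (2) sum.swap) (rule refl)
  finally show ?thesis unfolding bilin_def by (simp add: sum_distrib_left)
qed

lemma bilin_sum_right: "bilin m X u (\<lambda>l. \<Sum>i<h. c i * g i l) = (\<Sum>i<h. c i * bilin m X u (g i))"
proof -
  have "bilin m X u (\<lambda>l. \<Sum>i<h. c i * g i l) = (\<Sum>j<m. \<Sum>l<m. \<Sum>i<h. c i * (u j * X $$ (j,l) * g i l))"
    unfolding bilin_def by (intro sum.cong refl) (simp add: sum_distrib_left mult_ac)
  also have "\<dots> = (\<Sum>i<h. \<Sum>j<m. \<Sum>l<m. c i * (u j * X $$ (j,l) * g i l))"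
    by (subst sum.swap, subst (2) sum.swap) (rule refl)
  finally show ?thesis unfolding bilin_def by (simp add: sum_distrib_left)
qed

lemma bilin_span_left:
  assumes "\<forall>i<h. bilin m X (g i) w = 0" and "\<forall>j<m. u j = (\<Sum>i<h. c i * g i j)"
  shows "bilin m X u w = 0"
proof -
  have "bilin m X u w = bilin m X (\<lambda>j. \<Sum>i<h. c i * g i j) w"
    by (rule bilin_cong) (use assms(2) in auto)
  also have "\<dots> = 0" using assms(1) by (simp add: bilin_sum_left)
  finally show ?thesis .
qed

lemma diagm_carrier: "diagm m d \<in> carrier_mat m m"
  unfolding diagm_def by simp

lemma bilin_diagm: "bilin m (diagm m d) u w = (\<Sum>j<m. d j * u j * w j)"
proof -
  have "bilin m (diagm m d) u w = (\<Sum>j<m. \<Sum>l<m. if l = j then u j * d j * w l else 0)"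
    unfolding bilin_def diagm_def by (intro sum.cong refl) auto
  also have "\<dots> = (\<Sum>j<m. d j * u j * w j)" by (simp add: mult_ac)
  finally show ?thesis .
qed

lemma bilin_diagm_commute: "bilin m (diagm m d) u w = bilin m (diagm m d) w u"
  unfolding bilin_diagm by (simp add: mult_ac)

lemma abs_bilin_le:
  assumes "\<forall>j<m. \<forall>l<m. \<bar>X $$ (j,l)\<bar> \<le> C"
  shows "\<bar>bilin m X u w\<bar> \<le> C * norm1 m u * norm1 m w"
proof -
  have "\<bar>bilin m X u w\<bar> \<le> (\<Sum>j<m. \<Sum>l<m. \<bar>u j * X $$ (j,l) * w l\<bar>)"
    unfolding bilin_def by (rule order_trans[OF sum_abs]) (intro sum_mono sum_abs)
  also have "\<dots> \<le> (\<Sum>j<m. \<Sum>l<m. C * (\<bar>u j\<bar> * \<bar>w l\<bar>))"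
  proof (intro sum_mono)
    fix j l assume "j \<in> {..<m}" "l \<in> {..<m}"
    hence "\<bar>u j\<bar> * \<bar>X $$ (j,l)\<bar> * \<bar>w l\<bar> \<le> \<bar>u j\<bar> * C * \<bar>w l\<bar>"
      using assms by (intro mult_right_mono mult_left_mono) auto
    thus "\<bar>u j * X $$ (j,l) * w l\<bar> \<le> C * (\<bar>u j\<bar> * \<bar>w l\<bar>)" by (simp add: abs_mult mult_ac)
  qed
  also have "\<dots> = C * norm1 m u * norm1 m w"
    unfolding norm1_def by (simp add: sum_distrib_left sum_distrib_right mult_ac)
  finally show ?thesis .
qed

lemma norm1_nonneg: "norm1 m u \<ge> 0"
  unfolding norm1_def by (simp add: sum_nonneg)

lemma norm1_sq_le: "(norm1 m u)\<^sup>2 \<le> real m * sumsq m u"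
proof -
  have "(norm1 m u)\<^sup>2 = (\<Sum>j<m. \<Sum>l<m. \<bar>u j\<bar> * \<bar>u l\<bar>)"
    unfolding norm1_def power2_eq_square by (simp add: sum_product)
  also have "\<dots> \<le> (\<Sum>j<m. \<Sum>l<m. ((u j)\<^sup>2 + (u l)\<^sup>2) / 2)"
  proof (intro sum_mono)
    fix j l
    have "0 \<le> (\<bar>u j\<bar> - \<bar>u l\<bar>)\<^sup>2" by simp
    thus "\<bar>u j\<bar> * \<bar>u l\<bar> \<le> ((u j)\<^sup>2 + (u l)\<^sup>2) / 2"
      by (simp add: power2_eq_square algebra_simps)
  qed
  also have "\<dots> = real m * sumsq m u"
    unfolding sumsq_def
    by (simp add: sum.distrib add_divide_distrib sum_divide_distrib[symmetric] sum_distrib_left)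
  finally show ?thesis .
qed

section \<open>Gram matrices and their determinants\<close>

lemma gram_carrier:
  "P \<in> carrier_mat r m \<Longrightarrow> X \<in> carrier_mat m m \<Longrightarrow> P * X * transpose_mat P \<in> carrier_mat r r"
  by auto

lemma gram_entry:
  assumes "X \<in> carrier_mat m m" "i < r" "k < r"
  shows "(mat r m f * X * transpose_mat (mat r m f)) $$ (i,k) = bilin m X (\<lambda>j. f (i,j)) (\<lambda>l. f (k,l))"
proof -
  have "(mat r m f * X * transpose_mat (mat r m f)) $$ (i,k)
      = (\<Sum>l<m. \<Sum>j<m. f (i,j) * X $$ (j,l) * f (k,l))"
    using assms by (simp add: scalar_prod_def lessThan_atLeast0 sum_distrib_right)
  also have "\<dots> = bilin m X (\<lambda>j. f (i,j)) (\<lambda>l. f (k,l))"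
    unfolding bilin_def by (rule sum.swap)
  finally show ?thesis .
qed

lemma gram_mult_vec_nth:
  fixes h m :: nat and g :: "nat \<Rightarrow> nat \<Rightarrow> real"
  defines "M \<equiv> mat h m (\<lambda>(i,j). g i j)"
  assumes X: "X \<in> carrier_mat m m" and v: "v \<in> carrier_vec h" and i: "i < h"
  shows "((M * X * transpose_mat M) *\<^sub>v v) $ i = bilin m X (g i) (\<lambda>l. \<Sum>k<h. v $ k * g k l)"
proof -
  have entry: "(M * X * transpose_mat M) $$ (i,k) = bilin m X (g i) (g k)" if "k < h" for k
    using gram_entry[OF X i that] unfolding M_def by simp
  have "((M * X * transpose_mat M) *\<^sub>v v) $ i = (\<Sum>k<h. (M * X * transpose_mat M) $$ (i,k) * v $ k)"
    using v i by (simp add: M_def scalar_prod_def lessThan_atLeast0)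
  also have "\<dots> = (\<Sum>k<h. v $ k * bilin m X (g i) (g k))"
    by (intro sum.cong refl) (simp add: entry)
  finally show ?thesis by (simp add: bilin_sum_right)
qed

lemma invertible_mat_det_nonzero:
  fixes S :: "'a::comm_ring_1 mat"
  assumes S: "S \<in> carrier_mat h h" and "invertible_mat S"
  shows "det S \<noteq> 0"
proof -
  obtain B where SB: "S * B = 1\<^sub>m h" and BS: "B * S = 1\<^sub>m (dim_row B)"
    using assms unfolding invertible_mat_def inverts_mat_def by auto
  have "B \<in> carrier_mat h h"
    using arg_cong[OF SB, of dim_col] arg_cong[OF BS, of dim_col] S by auto
  hence "det S * det B = 1" using det_mult[OF S] SB by (metis det_one)
  thus ?thesis by auto
qed

lemma det_gram_diagm_nonzero:
  fixes h m :: nat and g :: "nat \<Rightarrow> nat \<Rightarrow> real"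
  defines "M \<equiv> mat h m (\<lambda>(i,j). g i j)"
  assumes X0: "X0 \<in> carrier_mat m m" and det0: "det (M * X0 * transpose_mat M) \<noteq> 0"
    and d_pos: "\<forall>j<m. d j > 0"
  shows "det (M * diagm m d * transpose_mat M) \<noteq> 0"
proof
  have M: "M \<in> carrier_mat h m" unfolding M_def by simp
  have D: "diagm m d \<in> carrier_mat m m" unfolding diagm_def by simp
  assume "det (M * diagm m d * transpose_mat M) = 0"
  then obtain v where v: "v \<in> carrier_vec h" "v \<noteq> 0\<^sub>v h"
    and Dv: "(M * diagm m d * transpose_mat M) *\<^sub>v v = 0\<^sub>v h"
    unfolding det_0_iff_vec_prod_zero[OF gram_carrier[OF M D]] by blast
  define u where "u l = (\<Sum>k<h. v $ k * g k l)" for l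
  have "(\<Sum>j<m. d j * u j * u j) = bilin m (diagm m d) u u"
    by (simp add: bilin_diagm)
  also have "\<dots> = (\<Sum>i<h. v $ i * bilin m (diagm m d) (g i) u)"
    unfolding u_def by (rule bilin_sum_left)
  also have "\<dots> = (\<Sum>i<h. v $ i * ((M * diagm m d * transpose_mat M) *\<^sub>v v) $ i)"
  proof (intro sum.cong refl)
    fix i assume "i \<in> {..<h}"
    hence "((M * diagm m d * transpose_mat M) *\<^sub>v v) $ i = bilin m (diagm m d) (g i) u"
      unfolding M_def u_def by (intro gram_mult_vec_nth[OF D v(1)]) simp
    thus "v $ i * bilin m (diagm m d) (g i) u = v $ i * ((M * diagm m d * transpose_mat M) *\<^sub>v v) $ i"
      by simp
  qed
  also have "\<dots> = 0" using Dv by simp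
  finally have "(\<Sum>j<m. d j * u j * u j) = 0" .
  moreover have "\<forall>j<m. d j * u j * u j \<ge> 0"
    using d_pos by (simp add: mult.assoc less_imp_le)
  ultimately have "\<forall>j<m. d j * (u j * u j) = 0"
    using sum_nonneg_eq_0_iff[of "{..<m}" "\<lambda>j. d j * u j * u j"] by (simp add: mult.assoc)
  hence u0: "\<forall>j<m. u j = 0" using d_pos by (metis mult_eq_0_iff less_irrefl)
  have "(M * X0 * transpose_mat M) *\<^sub>v v = 0\<^sub>v h"
  proof (rule eq_vecI)
    fix i assume "i < dim_vec (0\<^sub>v h :: real vec)"
    hence i: "i < h" by simp
    have "((M * X0 * transpose_mat M) *\<^sub>v v) $ i = bilin m X0 (g i) u"
      unfolding M_def u_def by (rule gram_mult_vec_nth[OF X0 v(1) i])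
    also have "\<dots> = 0" using u0 unfolding bilin_def by simp
    finally show "((M * X0 * transpose_mat M) *\<^sub>v v) $ i = 0\<^sub>v h $ i" using i by simp
  qed (use M in simp)
  thus False using det0 v unfolding det_0_iff_vec_prod_zero[OF gram_carrier[OF M X0]] by blast
qed

lemma gram_orthogonal_correction:
  fixes h m :: nat and g :: "nat \<Rightarrow> nat \<Rightarrow> real" and \<omega> :: "nat \<Rightarrow> real"
  defines "M \<equiv> mat h m (\<lambda>(i,j). g i j)"
  assumes X: "X \<in> carrier_mat m m" and det_M: "det (M * X * transpose_mat M) \<noteq> 0"
  obtains c where "\<forall>i<h. bilin m X (g i) (\<lambda>l. \<omega> l - (\<Sum>k<h. c k * g k l)) = 0"
proof -
  define S where "S = M * X * transpose_mat M"
  have S: "S \<in> carrier_mat h h" unfolding S_def M_def by (rule gram_carrier[OF _ X]) simp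
  have det_S: "det S \<noteq> 0" using det_M unfolding S_def .
  obtain B where B: "B \<in> carrier_mat h h" and SB: "S * B = 1\<^sub>m h"
    using det_non_zero_imp_unit[OF S det_S, of "()"] unfolding Units_def ring_mat_def by auto
  define b where "b = vec h (\<lambda>i. bilin m X (g i) \<omega>)"
  have b: "b \<in> carrier_vec h" unfolding b_def by simp
  define v where "v = B *\<^sub>v b"
  have v: "v \<in> carrier_vec h" unfolding v_def using B unfolding carrier_vec_def by simp
  have Sv: "S *\<^sub>v v = b"
  proof -
    have "S *\<^sub>v v = (S * B) *\<^sub>v b" unfolding v_def by (rule assoc_mult_mat_vec[OF S B b, symmetric])
    also have "\<dots> = b" unfolding SB using b by simp
    finally show ?thesis .
  qed
  have "\<forall>i<h. bilin m X (g i) (\<lambda>l. \<omega> l - (\<Sum>k<h. v $ k * g k l)) = 0"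
  proof (intro allI impI)
    fix i assume i: "i < h"
    have "bilin m X (g i) (\<lambda>l. \<Sum>k<h. v $ k * g k l) = (S *\<^sub>v v) $ i"
      unfolding S_def M_def by (rule gram_mult_vec_nth[OF X v i, symmetric])
    also have "\<dots> = bilin m X (g i) \<omega>" using i unfolding Sv b_def by simp
    finally show "bilin m X (g i) (\<lambda>l. \<omega> l - (\<Sum>k<h. v $ k * g k l)) = 0"
      unfolding bilin_diff_right by simp
  qed
  thus thesis by (rule that)
qed

lemma det_gram_left_unimodular:
  fixes L P X :: "'a::comm_ring_1 mat"
  assumes L: "L \<in> carrier_mat r r" and detL: "det L = 1"
    and P: "P \<in> carrier_mat r m" and X: "X \<in> carrier_mat m m"
  shows "det ((L * P) * X * transpose_mat (L * P)) = det (P * X * transpose_mat P)"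
proof -
  have G: "P * X * transpose_mat P \<in> carrier_mat r r" using P X by auto
  have PX: "P * X \<in> carrier_mat r m" using P X by auto
  have LPX: "L * (P * X) \<in> carrier_mat r m" using L PX by auto
  have Pt: "transpose_mat P \<in> carrier_mat m r" and Lt: "transpose_mat L \<in> carrier_mat r r"
    using P L by auto
  have "(L * P) * X * transpose_mat (L * P) = L * (P * X) * (transpose_mat P * transpose_mat L)"
    by (simp add: transpose_mult[OF L P] assoc_mult_mat[OF L P X])
  also have "\<dots> = L * (P * X) * transpose_mat P * transpose_mat L"
    by (rule assoc_mult_mat[OF LPX Pt Lt, symmetric])
  also have "\<dots> = L * (P * X * transpose_mat P) * transpose_mat L"
    by (simp add: assoc_mult_mat[OF L PX Pt])
  finally have "(L * P) * X * transpose_mat (L * P) = L * (P * X * transpose_mat P) * transpose_mat L" .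
  thus ?thesis
    using det_mult[OF mult_carrier_mat[OF L G], of "transpose_mat L"] det_mult[OF L G]
      det_transpose[OF L] detL L by simp
qed

lemma det_last_column_zero:
  fixes S :: "'a::comm_ring_1 mat"
  assumes S: "S \<in> carrier_mat (Suc h) (Suc h)" and zero: "\<forall>i<h. S $$ (i,h) = 0"
  shows "det S = S $$ (h,h) * det (mat_delete S h h)"
proof -
  have "det S = (\<Sum>i<Suc h. S $$ (i,h) * cofactor S i h)"
    by (rule laplace_expansion_column[OF S]) simp
  also have "\<dots> = S $$ (h,h) * cofactor S h h" using zero by simp
  finally show ?thesis unfolding cofactor_def by simp
qed

lemma last_row_reduction:
  fixes h m :: nat and g :: "nat \<Rightarrow> nat \<Rightarrow> 'a::comm_ring_1" and \<omega> c :: "nat \<Rightarrow> 'a"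
  obtains L where "L \<in> carrier_mat (h + 1) (h + 1)" and "det L = 1"
    and "L * mat (h + 1) m (\<lambda>(i,j). if i < h then g i j else \<omega> j)
       = mat (h + 1) m (\<lambda>(i,j). if i < h then g i j else \<omega> j - (\<Sum>k<h. c k * g k j))"
proof
  define L where "L = mat (h + 1) (h + 1) (\<lambda>(i,k). if i = k then 1 else if i = h \<and> k < h then - c k else 0)"
  define N where "N = mat (h + 1) m (\<lambda>(i,j). if i < h then g i j else \<omega> j)"
  show L: "L \<in> carrier_mat (h + 1) (h + 1)" unfolding L_def by simp
  have "det L = prod_list (diag_mat L)"
    by (rule det_lower_triangular[OF _ L]) (auto simp: L_def)
  also have "diag_mat L = map (\<lambda>_. 1) [0..<h+1]"
    unfolding diag_mat_def using L by (auto simp: L_def)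
  finally show "det L = 1" by (simp add: map_replicate_const)
  show "L * N = mat (h + 1) m (\<lambda>(i,j). if i < h then g i j else \<omega> j - (\<Sum>k<h. c k * g k j))"
  proof (rule eq_matI)
    fix i j assume "i < dim_row (mat (h + 1) m (\<lambda>(i,j). if i < h then g i j else \<omega> j - (\<Sum>k<h. c k * g k j)))"
      and "j < dim_col (mat (h + 1) m (\<lambda>(i,j). if i < h then g i j else \<omega> j - (\<Sum>k<h. c k * g k j)))"
    hence i: "i < h + 1" and j: "j < m" by auto
    have "(L * N) $$ (i,j) = (\<Sum>k<h+1. L $$ (i,k) * N $$ (k,j))"
      using i j L by (simp add: N_def scalar_prod_def lessThan_atLeast0)
    also have "\<dots> = (if i < h then g i j else \<omega> j - (\<Sum>k<h. c k * g k j))"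
    proof (cases "i < h")
      case True
      have "(\<Sum>k<h+1. L $$ (i,k) * N $$ (k,j)) = (\<Sum>k<h+1. if k = i then g i j else 0)"
        using True j by (intro sum.cong refl) (auto simp: L_def N_def)
      thus ?thesis using True by simp
    next
      case False
      hence "i = h" using i by simp
      have "(\<Sum>k<h. L $$ (h,k) * N $$ (k,j)) = (\<Sum>k<h. - c k * g k j)"
        using j by (intro sum.cong refl) (simp add: L_def N_def)
      thus ?thesis using \<open>i = h\<close> j by (simp add: L_def N_def sum_negf)
    qed
    finally show "(L * N) $$ (i,j)
      = mat (h + 1) m (\<lambda>(i,j). if i < h then g i j else \<omega> j - (\<Sum>k<h. c k * g k j)) $$ (i,j)"
      using i j by simp
  qed (use L in \<open>auto simp: N_def\<close>)
qed

lemma det_gram_append_row: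
  fixes h m :: nat and g :: "nat \<Rightarrow> nat \<Rightarrow> real" and \<omega> c :: "nat \<Rightarrow> real"
  defines "M \<equiv> mat h m (\<lambda>(i,j). g i j)"
    and "N \<equiv> mat (h + 1) m (\<lambda>(i,j). if i < h then g i j else \<omega> j)"
    and "x \<equiv> \<lambda>l. \<omega> l - (\<Sum>k<h. c k * g k l)"
  assumes X: "X \<in> carrier_mat m m" and orth: "\<forall>i<h. bilin m X (g i) x = 0"
  shows "det (N * X * transpose_mat N) = det (M * X * transpose_mat M) * bilin m X x x"
proof -
  define N' where "N' = mat (h + 1) m (\<lambda>(i,j). if i < h then g i j else x j)"
  define G where "G = N' * X * transpose_mat N'"
  obtain L where L: "L \<in> carrier_mat (h + 1) (h + 1)" and "det L = 1" and "L * N = N'"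
    using last_row_reduction[of h m g \<omega> c] unfolding N_def N'_def x_def by blast
  have N: "N \<in> carrier_mat (h + 1) m" unfolding N_def by simp
  have G: "G \<in> carrier_mat (Suc h) (Suc h)"
    unfolding G_def N'_def by (rule gram_carrier[OF _ X]) simp
  have G_entry: "G $$ (i,k) = bilin m X (if i < h then g i else x) (if k < h then g k else x)"
    if "i < h + 1" "k < h + 1" for i k
    unfolding G_def N'_def using gram_entry[OF X that] by (simp add: if_distrib)
  have "det (N * X * transpose_mat N) = det G"
    unfolding G_def using det_gram_left_unimodular[OF L \<open>det L = 1\<close> N X] \<open>L * N = N'\<close> by simp
  also have "\<dots> = G $$ (h,h) * det (mat_delete G h h)"
    by (rule det_last_column_zero[OF G]) (use orth G_entry in simp)
  also have "mat_delete G h h = M * X * transpose_mat M"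
  proof (rule eq_matI)
    fix i k assume "i < dim_row (M * X * transpose_mat M)" "k < dim_col (M * X * transpose_mat M)"
    hence i: "i < h" and k: "k < h" unfolding M_def by auto
    have "(M * X * transpose_mat M) $$ (i,k) = bilin m X (g i) (g k)"
      unfolding M_def using gram_entry[OF X i k] by simp
    thus "mat_delete G h h $$ (i,k) = (M * X * transpose_mat M) $$ (i,k)"
      using i k G by (simp add: mat_delete_def G_entry)
  qed (use G in \<open>auto simp: M_def\<close>)
  finally show ?thesis using G_entry[of h h] by simp
qed

lemma gram_ratio_eq_energy:
  fixes h m :: nat and g :: "nat \<Rightarrow> nat \<Rightarrow> real" and \<omega> :: "nat \<Rightarrow> real"
  defines "M \<equiv> mat h m (\<lambda>(i,j). g i j)"
    and "N \<equiv> mat (h + 1) m (\<lambda>(i,j). if i < h then g i j else \<omega> j)"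
  assumes X: "X \<in> carrier_mat m m" and det_M: "det (M * X * transpose_mat M) \<noteq> 0"
  obtains c where "\<forall>i<h. bilin m X (g i) (\<lambda>l. \<omega> l - (\<Sum>k<h. c k * g k l)) = 0"
    and "det (N * X * transpose_mat N) / det (M * X * transpose_mat M)
       = bilin m X (\<lambda>l. \<omega> l - (\<Sum>k<h. c k * g k l)) (\<lambda>l. \<omega> l - (\<Sum>k<h. c k * g k l))"
proof -
  obtain c where orth: "\<forall>i<h. bilin m X (g i) (\<lambda>l. \<omega> l - (\<Sum>k<h. c k * g k l)) = 0"
    using gram_orthogonal_correction[OF X det_M[unfolded M_def]] .
  moreover have "det (N * X * transpose_mat N) / det (M * X * transpose_mat M)
       = bilin m X (\<lambda>l. \<omega> l - (\<Sum>k<h. c k * g k l)) (\<lambda>l. \<omega> l - (\<Sum>k<h. c k * g k l))"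
    using det_gram_append_row[OF X orth] det_M unfolding M_def N_def by simp
  ultimately show thesis by (rule that)
qed

section \<open>Perturbation of the minimal energy\<close>

lemma bilin_coercive:
  assumes d: "\<forall>j<m. d j \<ge> C * real m + 1" and A: "A \<in> carrier_mat m m"
    and A_bdd: "\<forall>j<m. \<forall>l<m. \<bar>A $$ (j,l)\<bar> \<le> C" and C: "C \<ge> 0"
  shows "sumsq m u \<le> bilin m (diagm m d + A) u u"
proof -
  have "(C * real m + 1) * sumsq m u \<le> bilin m (diagm m d) u u"
    unfolding bilin_diagm sumsq_def sum_distrib_left
    by (rule sum_mono) (use d in \<open>auto simp: power2_eq_square mult.assoc intro: mult_right_mono\<close>)
  moreover have "- (C * (real m * sumsq m u)) \<le> bilin m A u u"
  proof -
    have "\<bar>bilin m A u u\<bar> \<le> C * (norm1 m u)\<^sup>2"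
      using abs_bilin_le[OF A_bdd] by (simp add: power2_eq_square mult.assoc)
    also have "\<dots> \<le> C * (real m * sumsq m u)" by (intro mult_left_mono norm1_sq_le C)
    finally show ?thesis by simp
  qed
  ultimately show ?thesis
    unfolding bilin_add_mat[OF diagm_carrier A] by (simp add: algebra_simps)
qed

lemma correction_norm1_le:
  assumes d: "\<forall>j<m. d j \<ge> C * real m + 1" and A: "A \<in> carrier_mat m m"
    and A_bdd: "\<forall>j<m. \<forall>l<m. \<bar>A $$ (j,l)\<bar> \<le> C" and C: "C \<ge> 0"
    and orth_A: "\<forall>i<h. bilin m (diagm m d + A) (g i) (\<lambda>j. x j + \<delta> j) = 0"
    and orth_D: "\<forall>i<h. bilin m (diagm m d) (g i) x = 0"
    and span: "\<forall>j<m. \<delta> j = (\<Sum>i<h. c i * g i j)"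
    and K: "norm1 m x \<le> K"
  shows "norm1 m \<delta> \<le> real m * C * K"
proof -
  \<comment> \<open>\<delta> is a combination of the g i, so orthogonality turns \<delta>^T X \<delta> into - \<delta>^T A x.\<close>
  have "bilin m (diagm m d + A) \<delta> (\<lambda>j. x j + \<delta> j) = 0" by (rule bilin_span_left[OF orth_A span])
  moreover have "bilin m (diagm m d) \<delta> x = 0" by (rule bilin_span_left[OF orth_D span])
  ultimately have energy: "bilin m (diagm m d + A) \<delta> \<delta> = - bilin m A \<delta> x"
    unfolding bilin_add_right by (simp add: bilin_add_mat[OF diagm_carrier A])
  have "(norm1 m \<delta>)\<^sup>2 \<le> real m * sumsq m \<delta>" by (rule norm1_sq_le)
  also have "\<dots> \<le> real m * \<bar>bilin m A \<delta> x\<bar>"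
    using bilin_coercive[OF d A A_bdd C, of \<delta>] energy by (intro mult_left_mono) auto
  also have "\<dots> \<le> real m * (C * norm1 m \<delta> * K)"
  proof (intro mult_left_mono)
    have "C * norm1 m \<delta> * norm1 m x \<le> C * norm1 m \<delta> * K"
      using K C norm1_nonneg[of m \<delta>] by (intro mult_left_mono) auto
    thus "\<bar>bilin m A \<delta> x\<bar> \<le> C * norm1 m \<delta> * K" using abs_bilin_le[OF A_bdd, of \<delta> x] by linarith
  qed simp
  finally have sq: "norm1 m \<delta> * norm1 m \<delta> \<le> (real m * C * K) * norm1 m \<delta>"
    by (simp add: power2_eq_square mult_ac)
  have "K \<ge> 0" using K norm1_nonneg[of m x] by linarith
  show ?thesis
  proof (cases "norm1 m \<delta> = 0")
    case True thus ?thesis using C \<open>K \<ge> 0\<close> by simp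
  next
    case False
    hence "norm1 m \<delta> > 0" using norm1_nonneg[of m \<delta>] by linarith
    thus ?thesis using sq by (rule mult_right_le_imp_le[rotated])
  qed
qed

lemma energy_perturbation:
  assumes d: "\<forall>j<m. d j \<ge> C * real m + 1" and A: "A \<in> carrier_mat m m"
    and A_bdd: "\<forall>j<m. \<forall>l<m. \<bar>A $$ (j,l)\<bar> \<le> C" and C: "C \<ge> 0"
    and orth_A: "\<forall>i<h. bilin m (diagm m d + A) (g i) (\<lambda>j. x j + \<delta> j) = 0"
    and orth_D: "\<forall>i<h. bilin m (diagm m d) (g i) x = 0"
    and span: "\<forall>j<m. \<delta> j = (\<Sum>i<h. c i * g i j)"
    and K: "norm1 m x \<le> K"
  shows "\<bar>bilin m (diagm m d + A) (\<lambda>j. x j + \<delta> j) (\<lambda>j. x j + \<delta> j) - bilin m (diagm m d) x x\<bar>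
    \<le> C * K * K + C * K * (real m * C * K)"
proof -
  have \<delta>: "norm1 m \<delta> \<le> real m * C * K" by (rule correction_norm1_le[OF assms])
  have "bilin m (diagm m d + A) \<delta> (\<lambda>j. x j + \<delta> j) = 0" by (rule bilin_span_left[OF orth_A span])
  moreover have "bilin m (diagm m d) x \<delta> = 0"
    using bilin_span_left[OF orth_D span] by (simp add: bilin_diagm_commute)
  ultimately have diff: "bilin m (diagm m d + A) (\<lambda>j. x j + \<delta> j) (\<lambda>j. x j + \<delta> j) - bilin m (diagm m d) x x
    = bilin m A x x + bilin m A x \<delta>"
    by (simp add: bilin_add_left bilin_add_right bilin_add_mat[OF diagm_carrier A])
  have "\<bar>bilin m A x x + bilin m A x \<delta>\<bar> \<le> C * norm1 m x * norm1 m x + C * norm1 m x * norm1 m \<delta>"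
    using abs_bilin_le[OF A_bdd, of x x] abs_bilin_le[OF A_bdd, of x \<delta>] by linarith
  also have "\<dots> \<le> C * K * K + C * K * (real m * C * K)"
    using K \<delta> C norm1_nonneg[of m x] norm1_nonneg[of m \<delta>]
    by (intro add_mono mult_mono mult_nonneg_nonneg) auto
  finally show ?thesis unfolding diff .
qed

lemma gram_ratio_perturbation:
  fixes h m :: nat and g :: "nat \<Rightarrow> nat \<Rightarrow> real" and \<omega> d :: "nat \<Rightarrow> real"
  defines "M \<equiv> mat h m (\<lambda>(i,j). g i j)"
    and "N \<equiv> mat (h + 1) m (\<lambda>(i,j). if i < h then g i j else \<omega> j)"
  assumes d: "\<forall>j<m. d j \<ge> C * real m + 1" and A: "A \<in> carrier_mat m m"
    and A_bdd: "\<forall>j<m. \<forall>l<m. \<bar>A $$ (j,l)\<bar> \<le> C" and C: "C \<ge> 0"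
    and det_M: "det (M * (diagm m d + A) * transpose_mat M) \<noteq> 0"
    and K: "\<And>c. \<forall>i<h. bilin m (diagm m d) (g i) (\<lambda>l. \<omega> l - (\<Sum>k<h. c k * g k l)) = 0 \<Longrightarrow>
      norm1 m (\<lambda>l. \<omega> l - (\<Sum>k<h. c k * g k l)) \<le> K"
  shows "\<bar>det (N * (diagm m d + A) * transpose_mat N) / det (M * (diagm m d + A) * transpose_mat M)
    - det (N * diagm m d * transpose_mat N) / det (M * diagm m d * transpose_mat M)\<bar>
    \<le> C * K * K + C * K * (real m * C * K)"
proof -
  have X: "diagm m d + A \<in> carrier_mat m m" using A diagm_carrier by simp
  have "\<forall>j<m. d j > 0"
  proof (intro allI impI)
    fix j assume "j < m"
    moreover have "0 \<le> C * real m" using C by simp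
    ultimately show "d j > 0" using d by force
  qed
  hence det_D: "det (M * diagm m d * transpose_mat M) \<noteq> 0"
    unfolding M_def by (rule det_gram_diagm_nonzero[OF X det_M[unfolded M_def]])
  obtain a where orth_A: "\<forall>i<h. bilin m (diagm m d + A) (g i) (\<lambda>l. \<omega> l - (\<Sum>k<h. a k * g k l)) = 0"
    and ratio_A: "det (N * (diagm m d + A) * transpose_mat N) / det (M * (diagm m d + A) * transpose_mat M)
      = bilin m (diagm m d + A) (\<lambda>l. \<omega> l - (\<Sum>k<h. a k * g k l)) (\<lambda>l. \<omega> l - (\<Sum>k<h. a k * g k l))"
    using gram_ratio_eq_energy[OF X det_M[unfolded M_def]] unfolding M_def N_def by blast
  obtain b where orth_D: "\<forall>i<h. bilin m (diagm m d) (g i) (\<lambda>l. \<omega> l - (\<Sum>k<h. b k * g k l)) = 0"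
    and ratio_D: "det (N * diagm m d * transpose_mat N) / det (M * diagm m d * transpose_mat M)
      = bilin m (diagm m d) (\<lambda>l. \<omega> l - (\<Sum>k<h. b k * g k l)) (\<lambda>l. \<omega> l - (\<Sum>k<h. b k * g k l))"
    using gram_ratio_eq_energy[OF diagm_carrier det_D[unfolded M_def]] unfolding M_def N_def by blast
  define x where "x = (\<lambda>l. \<omega> l - (\<Sum>k<h. b k * g k l))"
  define \<delta> where "\<delta> = (\<lambda>l. \<Sum>k<h. (b k - a k) * g k l)"
  have shift: "(\<lambda>l. \<omega> l - (\<Sum>k<h. a k * g k l)) = (\<lambda>l. x l + \<delta> l)"
    by (simp add: x_def \<delta>_def left_diff_distrib sum_subtractf)
  have orth_x: "\<forall>i<h. bilin m (diagm m d) (g i) x = 0" using orth_D unfolding x_def .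
  have "norm1 m x \<le> K" unfolding x_def by (rule K[OF orth_D])
  from energy_perturbation[OF d A A_bdd C orth_A[unfolded shift] orth_x _ this, of "\<lambda>k. b k - a k"]
  show ?thesis unfolding ratio_A ratio_D shift by (simp add: x_def \<delta>_def)
qed

section \<open>Potential flows on a graph\<close>

lemma bdry_eq_sum_incidence:
  "bdry m hed tal x v = (\<Sum>j<m. x j * (of_bool (hed j = v) - of_bool (tal j = v)))"
  unfolding bdry_def by (intro sum.cong refl) auto

lemma bdry_diff: "bdry m hed tal (\<lambda>j. x j - x' j) v = bdry m hed tal x v - bdry m hed tal x' v"
  unfolding bdry_eq_sum_incidence by (simp add: sum_subtractf left_diff_distrib)

lemma bdry_sum:
  "bdry m hed tal (\<lambda>j. \<Sum>k<h. c k * g k j) v = (\<Sum>k<h. c k * bdry m hed tal (g k) v)"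
  unfolding bdry_eq_sum_incidence
  by (simp add: sum_distrib_left sum_distrib_right mult.assoc sum.swap[of _ "{..<m}"])

lemma bdry_of_int: "bdry m hed tal (\<lambda>j. of_int (z j)) v = of_int (bdry m hed tal z v)"
  unfolding bdry_eq_sum_incidence by simp

lemma sum_bdry:
  assumes "finite R"
  shows "(\<Sum>v\<in>R. bdry m hed tal x v) = (\<Sum>j<m. x j * (of_bool (hed j \<in> R) - of_bool (tal j \<in> R)))"
proof -
  have "(\<Sum>v\<in>R. bdry m hed tal x v) = (\<Sum>j<m. \<Sum>v\<in>R. x j * (of_bool (hed j = v) - of_bool (tal j = v)))"
    unfolding bdry_eq_sum_incidence by (rule sum.swap)
  also have "\<dots> = (\<Sum>j<m. x j * (of_bool (hed j \<in> R) - of_bool (tal j \<in> R)))"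
    using assms by (simp add: sum_distrib_left[symmetric] sum_subtractf of_bool_def sum.delta)
  finally show ?thesis .
qed

definition flow_edge :: "nat \<Rightarrow> (nat \<Rightarrow> nat) \<Rightarrow> (nat \<Rightarrow> nat) \<Rightarrow> (nat \<Rightarrow> real) \<Rightarrow> nat \<Rightarrow> nat \<Rightarrow> bool" where
  "flow_edge m hed tal x u w \<longleftrightarrow>
     (\<exists>j<m. (x j > 0 \<and> tal j = u \<and> hed j = w) \<or> (x j < 0 \<and> hed j = u \<and> tal j = w))"

lemma chain_extend_along_flow:
  fixes z :: "nat \<Rightarrow> int"
  assumes j: "j < m" and flow: "(x j > 0 \<and> tal j = u \<and> hed j = w) \<or> (x j < 0 \<and> hed j = u \<and> tal j = w)"
    and coherent: "\<forall>k. real_of_int (z k) * x k \<ge> 0"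
  obtains z' :: "nat \<Rightarrow> int"
  where "\<forall>v. bdry m hed tal z' v = bdry m hed tal z v + of_bool (v = w) - of_bool (v = u)"
    and "real_of_int (z' j) * x j > 0"
    and "\<forall>k. real_of_int (z' k) * x k \<ge> 0"
proof
  define z' where "z' = (\<lambda>k. z k + (if k = j then (if x j > 0 then 1 else -1) else 0))"
  show "\<forall>v. bdry m hed tal z' v = bdry m hed tal z v + of_bool (v = w) - of_bool (v = u)"
  proof
    fix v
    have "bdry m hed tal z' v = bdry m hed tal z v
        + (\<Sum>k<m. if k = j then (if x j > 0 then 1 else -1) * (of_bool (hed k = v) - of_bool (tal k = v)) else 0)"
      unfolding bdry_eq_sum_incidence z'_def sum.distrib[symmetric]
      by (intro sum.cong refl) (auto simp: algebra_simps)
    thus "bdry m hed tal z' v = bdry m hed tal z v + of_bool (v = w) - of_bool (v = u)"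
      using j flow by (auto simp: sum.delta)
  qed
  have "real_of_int (z' j) * x j = real_of_int (z j) * x j + \<bar>x j\<bar>"
    using flow by (auto simp: z'_def distrib_right)
  moreover have "x j \<noteq> 0" using flow by auto
  ultimately show pos: "real_of_int (z' j) * x j > 0" using coherent[rule_format, of j] by simp
  show "\<forall>k. real_of_int (z' k) * x k \<ge> 0"
    using coherent pos by (auto simp: z'_def less_imp_le)
qed

lemma flow_path_chain:
  assumes "(flow_edge m hed tal x)\<^sup>*\<^sup>* a b"
  shows "\<exists>z::nat \<Rightarrow> int. (\<forall>v. bdry m hed tal z v = of_bool (v = b) - of_bool (v = a))
    \<and> (\<forall>k. real_of_int (z k) * x k \<ge> 0)"
  using assms
proof (induction rule: rtranclp_induct)
  case base
  show ?case by (rule exI[of _ "\<lambda>_. 0"]) (simp add: bdry_def)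
next
  case (step b c)
  obtain z where z: "\<forall>v. bdry m hed tal z v = of_bool (v = b) - of_bool (v = a)"
    and coherent: "\<forall>k. real_of_int (z k) * x k \<ge> 0"
    using step.IH by blast
  obtain j where j: "j < m" and flow: "(x j > 0 \<and> tal j = b \<and> hed j = c) \<or> (x j < 0 \<and> hed j = b \<and> tal j = c)"
    using step.hyps(2) unfolding flow_edge_def by blast
  obtain z' :: "nat \<Rightarrow> int" where "\<forall>v. bdry m hed tal z' v = bdry m hed tal z v + of_bool (v = c) - of_bool (v = b)"
    and "\<forall>k. real_of_int (z' k) * x k \<ge> 0"
    using chain_extend_along_flow[where hed = hed and tal = tal, OF j flow coherent] by blast
  thus ?case using z by (intro exI[of _ z']) auto
qed

lemma flow_edge_acyclic:
  assumes orth: "\<forall>z. is_cycle n m hed tal z \<longrightarrow> (\<Sum>j<m. y j * x j * real_of_int (z j)) = 0"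
    and y_pos: "\<forall>j<m. y j > 0" and edge: "flow_edge m hed tal x u w"
  shows "\<not> (flow_edge m hed tal x)\<^sup>*\<^sup>* w u"
  \<comment> \<open>A directed cycle of the flow is an integer cycle pairing strictly positively with Y x.\<close>
proof
  assume "(flow_edge m hed tal x)\<^sup>*\<^sup>* w u"
  then obtain z where z: "\<forall>v. bdry m hed tal z v = of_bool (v = u) - of_bool (v = w)"
    and coherent: "\<forall>k. real_of_int (z k) * x k \<ge> 0"
    using flow_path_chain by blast
  obtain j where j: "j < m" and flow: "(x j > 0 \<and> tal j = u \<and> hed j = w) \<or> (x j < 0 \<and> hed j = u \<and> tal j = w)"
    using edge unfolding flow_edge_def by blast
  obtain z' :: "nat \<Rightarrow> int" where bdry_z': "\<forall>v. bdry m hed tal z' v = bdry m hed tal z v + of_bool (v = w) - of_bool (v = u)"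
    and pos: "real_of_int (z' j) * x j > 0" and coherent': "\<forall>k. real_of_int (z' k) * x k \<ge> 0"
    using chain_extend_along_flow[where hed = hed and tal = tal, OF j flow coherent] by blast
  have "is_cycle n m hed tal z'" unfolding is_cycle_def using bdry_z' z by simp
  hence "(\<Sum>k<m. y k * x k * real_of_int (z' k)) = 0" using orth by blast
  moreover have "(\<Sum>k<m. y k * x k * real_of_int (z' k)) > 0"
  proof (rule sum_pos2)
    show "0 < y j * x j * real_of_int (z' j)"
      using pos y_pos j by (metis mult.assoc mult.commute mult_pos_pos)
    show "0 \<le> y k * x k * real_of_int (z' k)" if "k \<in> {..<m}" for k
      using coherent' y_pos that by (metis lessThan_iff mult.assoc mult.commute mult_nonneg_nonneg less_imp_le)
  qed (use j in auto)
  ultimately show False by simp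
qed

lemma flow_closed_set_outflow_nonneg:
  assumes edges: "\<forall>j<m. hed j < n \<and> tal j < n" and j: "j < m"
    and closed: "\<And>u w. u \<in> R \<Longrightarrow> flow_edge m hed tal x u w \<Longrightarrow> w < n \<Longrightarrow> w \<in> R"
  shows "x j * (of_bool (hed j \<in> R) - of_bool (tal j \<in> R)) \<ge> 0"
proof -
  have ends: "hed j < n" "tal j < n" using edges j by auto
  consider "x j > 0" | "x j < 0" | "x j = 0" by linarith
  thus ?thesis
  proof cases
    case 1
    hence "flow_edge m hed tal x (tal j) (hed j)" using j unfolding flow_edge_def by blast
    hence "tal j \<in> R \<Longrightarrow> hed j \<in> R" using closed ends by blast
    thus ?thesis using 1 by (cases "tal j \<in> R") auto
  next
    case 2
    hence "flow_edge m hed tal x (hed j) (tal j)" using j unfolding flow_edge_def by blast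
    hence "hed j \<in> R \<Longrightarrow> tal j \<in> R" using closed ends by blast
    thus ?thesis using 2 by (cases "hed j \<in> R") (auto simp: mult_le_0_iff)
  qed simp
qed

lemma potential_flow_bound:
  fixes x y p :: "nat \<Rightarrow> real"
  assumes edges: "\<forall>j<m. hed j < n \<and> tal j < n"
    and orth: "\<forall>z. is_cycle n m hed tal z \<longrightarrow> (\<Sum>j<m. y j * x j * real_of_int (z j)) = 0"
    and y_pos: "\<forall>j<m. y j > 0" and bd: "\<forall>v<n. bdry m hed tal x v = p v" and e: "e < m"
  shows "\<bar>x e\<bar> \<le> (\<Sum>v<n. \<bar>p v\<bar>)"
proof (cases "x e = 0")
  case True
  thus ?thesis by (simp add: sum_nonneg)
next
  case False
  define a where "a = (if x e > 0 then tal e else hed e)"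
  define b where "b = (if x e > 0 then hed e else tal e)"
  have "flow_edge m hed tal x a b"
    using False e unfolding flow_edge_def a_def b_def by (cases "x e > 0") auto
  hence no_return: "\<not> (flow_edge m hed tal x)\<^sup>*\<^sup>* b a" by (rule flow_edge_acyclic[OF orth y_pos])
  \<comment> \<open>Flow only leaves R, and e leaves it, so |x e| is at most the net outflow of R, the sum of p over R.\<close>
  define R where "R = {v. v < n \<and> (flow_edge m hed tal x)\<^sup>*\<^sup>* b v}"
  have "b < n" using e edges unfolding b_def by simp
  hence b_R: "b \<in> R" unfolding R_def by simp
  have a_R: "a \<notin> R" using no_return unfolding R_def by simp
  have closed: "\<And>u w. u \<in> R \<Longrightarrow> flow_edge m hed tal x u w \<Longrightarrow> w < n \<Longrightarrow> w \<in> R"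
    using rtranclp.rtrancl_into_rtrancl[of "flow_edge m hed tal x" b] unfolding R_def by blast
  define t where "t j = x j * (of_bool (hed j \<in> R) - of_bool (tal j \<in> R))" for j
  have t_nonneg: "t j \<ge> 0" if "j < m" for j
    unfolding t_def by (rule flow_closed_set_outflow_nonneg[OF edges that closed])
  have "\<bar>x e\<bar> = t e" using False b_R a_R unfolding t_def a_def b_def by (cases "x e > 0") simp_all
  also have "\<dots> \<le> (\<Sum>j<m. t j)" by (rule member_le_sum) (use e t_nonneg in auto)
  also have "\<dots> = (\<Sum>v\<in>R. bdry m hed tal x v)" unfolding t_def by (rule sum_bdry[symmetric]) (simp add: R_def)
  also have "\<dots> = (\<Sum>v\<in>R. p v)" using bd by (intro sum.cong refl) (simp add: R_def)
  also have "\<dots> \<le> (\<Sum>v\<in>R. \<bar>p v\<bar>)" by (rule sum_mono) simp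
  also have "\<dots> \<le> (\<Sum>v<n. \<bar>p v\<bar>)" by (rule sum_mono2) (auto simp: R_def)
  finally show ?thesis .
qed

lemma cycle_orthogonal_if_basis_orthogonal:
  assumes basis: "is_H1_basis n m hed tal h \<gamma>"
    and orth: "\<forall>i<h. (\<Sum>j<m. w j * real_of_int (\<gamma> i j)) = 0"
  shows "\<forall>z. is_cycle n m hed tal z \<longrightarrow> (\<Sum>j<m. w j * real_of_int (z j)) = 0"
proof (intro allI impI)
  fix z assume "is_cycle n m hed tal z"
  then obtain c :: "nat \<Rightarrow> int" where c: "\<forall>j<m. z j = (\<Sum>i<h. c i * \<gamma> i j)"
    using basis unfolding is_H1_basis_def by blast
  have "(\<Sum>j<m. w j * real_of_int (z j)) = (\<Sum>j<m. \<Sum>i<h. real_of_int (c i) * (w j * real_of_int (\<gamma> i j)))"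
    using c by (intro sum.cong refl) (simp add: sum_distrib_left mult_ac)
  also have "\<dots> = (\<Sum>i<h. real_of_int (c i) * (\<Sum>j<m. w j * real_of_int (\<gamma> i j)))"
    by (subst sum.swap) (simp add: sum_distrib_left)
  also have "\<dots> = 0" using orth by simp
  finally show "(\<Sum>j<m. w j * real_of_int (z j)) = 0" .
qed

lemma potential_flow_norm1_le:
  fixes \<gamma> :: "nat \<Rightarrow> nat \<Rightarrow> int" and \<omega> p y c :: "nat \<Rightarrow> real"
  assumes edges: "\<forall>j<m. hed j < n \<and> tal j < n" and basis: "is_H1_basis n m hed tal h \<gamma>"
    and \<omega>: "\<forall>v<n. bdry m hed tal \<omega> v = p v" and y_pos: "\<forall>j<m. y j > 0"
    and orth: "\<forall>i<h. bilin m (diagm m y) (\<lambda>j. real_of_int (\<gamma> i j))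
      (\<lambda>l. \<omega> l - (\<Sum>k<h. c k * real_of_int (\<gamma> k l))) = 0"
  shows "norm1 m (\<lambda>l. \<omega> l - (\<Sum>k<h. c k * real_of_int (\<gamma> k l))) \<le> real m * (\<Sum>v<n. \<bar>p v\<bar>)"
proof -
  define x where "x = (\<lambda>l. \<omega> l - (\<Sum>k<h. c k * real_of_int (\<gamma> k l)))"
  have cycles: "bdry m hed tal (\<lambda>j. real_of_int (\<gamma> k j)) v = 0" if "k < h" "v < n" for k v
    using basis that unfolding is_H1_basis_def is_cycle_def by (simp add: bdry_of_int)
  have bd: "\<forall>v<n. bdry m hed tal x v = p v"
    using \<omega> cycles unfolding x_def bdry_diff bdry_sum by simp
  have "\<forall>i<h. (\<Sum>j<m. y j * x j * real_of_int (\<gamma> i j)) = 0"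
    using orth unfolding x_def[symmetric] bilin_diagm by (simp add: mult_ac)
  hence "\<forall>z. is_cycle n m hed tal z \<longrightarrow> (\<Sum>j<m. y j * x j * real_of_int (z j)) = 0"
    by (rule cycle_orthogonal_if_basis_orthogonal[OF basis])
  hence "\<bar>x j\<bar> \<le> (\<Sum>v<n. \<bar>p v\<bar>)" if "j < m" for j
    using potential_flow_bound[OF edges _ y_pos bd that] by blast
  hence "norm1 m x \<le> (\<Sum>j<m. \<Sum>v<n. \<bar>p v\<bar>)" unfolding norm1_def by (intro sum_mono) simp
  thus ?thesis unfolding x_def by simp
qed

theorem theorem1p1:
  fixes n m :: nat and hed tal :: "nat \<Rightarrow> nat"
    and \<gamma> :: "nat \<Rightarrow> nat \<Rightarrow> int" and p \<omega> :: "nat \<Rightarrow> real"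
    and y :: "nat \<Rightarrow> 's::topological_space \<Rightarrow> real" and A :: "'s \<Rightarrow> real mat"
    and C :: real
  defines "h \<equiv> m + 1 - n"
  defines "M \<equiv> mat h m (\<lambda>(i,j). real_of_int (\<gamma> i j))"
  defines "N \<equiv> mat (h + 1) m (\<lambda>(i,j). if i < h then real_of_int (\<gamma> i j) else \<omega> j)"
  defines "Y \<equiv> (\<lambda>s. diagm m (\<lambda>j. y j s))"
  assumes n_pos: "n \<ge> 1"
    and edges: "\<forall>j<m. hed j < n \<and> tal j < n"
    and conn: "graph_connected n m hed tal"
    and basis: "is_H1_basis n m hed tal h \<gamma>"
    and p_nz: "\<exists>v<n. p v \<noteq> 0"
    and p_sum: "(\<Sum>v<n. p v) = 0"
    and omega: "\<forall>v<n. bdry m hed tal \<omega> v = p v"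
    and y_cont: "\<forall>j<m. continuous_on UNIV (y j)"
    and y_pos: "\<forall>j<m. \<forall>s. y j s > 0"
    and A_dim: "\<forall>s. A s \<in> carrier_mat m m"
    and C_pos: "C > 0"
    and A_bdd: "\<forall>s. \<forall>i<m. \<forall>j<m. \<bar>A s $$ (i,j)\<bar> \<le> C"
    and invM: "\<forall>s. invertible_mat (M * (Y s + A s) * transpose_mat M)"
    and invN: "\<forall>s. invertible_mat (N * (Y s + A s) * transpose_mat N)"
  shows "\<exists>c C'. c > 0 \<and> C' > 0 \<and>
    (\<forall>s. (\<forall>j<m. y j s \<ge> C') \<longrightarrow>
       \<bar>det (N * (Y s + A s) * transpose_mat N) / det (M * (Y s + A s) * transpose_mat M)
        - det (N * Y s * transpose_mat N) / det (M * Y s * transpose_mat M)\<bar> \<le> c * 1)"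
proof -
  define K where "K = real m * (\<Sum>v<n. \<bar>p v\<bar>)"
  define c where "c = C * K * K + C * K * (real m * C * K)"
  have bound: "\<bar>det (N * (Y s + A s) * transpose_mat N) / det (M * (Y s + A s) * transpose_mat M)
        - det (N * Y s * transpose_mat N) / det (M * Y s * transpose_mat M)\<bar> \<le> c"
    if y_large: "\<forall>j<m. y j s \<ge> C * real m + 1" for s
  proof -
    have A: "A s \<in> carrier_mat m m" using A_dim by simp
    have "Y s + A s \<in> carrier_mat m m" unfolding Y_def using diagm_carrier A by simp
    hence "M * (Y s + A s) * transpose_mat M \<in> carrier_mat h h"
      by (rule gram_carrier[rotated]) (simp add: M_def)
    hence "det (M * (Y s + A s) * transpose_mat M) \<noteq> 0"
      using invM invertible_mat_det_nonzero by blast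
    moreover have "\<And>a. \<forall>i<h. bilin m (diagm m (\<lambda>j. y j s)) (\<lambda>j. real_of_int (\<gamma> i j))
        (\<lambda>l. \<omega> l - (\<Sum>k<h. a k * real_of_int (\<gamma> k l))) = 0 \<Longrightarrow>
      norm1 m (\<lambda>l. \<omega> l - (\<Sum>k<h. a k * real_of_int (\<gamma> k l))) \<le> K"
      unfolding K_def using y_pos by (intro potential_flow_norm1_le[OF edges basis omega]) auto
    ultimately show ?thesis
      unfolding c_def Y_def M_def N_def
      by (intro gram_ratio_perturbation[where g = "\<lambda>i j. real_of_int (\<gamma> i j)", OF y_large A _ _ ])
        (use A_bdd C_pos in \<open>auto simp: M_def Y_def\<close>)
  qed
  have "c \<ge> 0" unfolding c_def K_def using C_pos by (simp add: sum_nonneg)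
  moreover have "C * real m + 1 > 0" using C_pos by (simp add: add_nonneg_pos)
  ultimately show ?thesis using bound by (intro exI[of _ "c + 1"] exI[of _ "C * real m + 1"]) force
qed

end
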